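(* Let $\mathcal{K}$ be a continuous unitary representation of $\overline{\mathfrak{S}}_\infty$ in a Hilbert space $\mathcal{H}$, let $n\ge 0$ and $k\ge 1$ be integers, let $P_n$ be the weak-operator limit of $\mathcal{K}({}^n\sigma_m)$ as $m\to\infty$, and let $O_k$ be the weak-operator limit of $\mathcal{K}((k\;\;N))$ as $N\to\infty$. Then $P_nO_k=O_kP_n$.
   Context: $\overline{\mathfrak{S}}_\infty$ is the group of all bijections of $\mathbb{N}$, with the Polish topology in which the subgroups $\mathfrak{S}(n,\infty)=\{s: s(j)=j \text{ for } j=1,\dots,n\}$ form a fundamental system of neighborhoods of the identity; continuity of $\mathcal{K}$ means $\lim_{n\to\infty}\sup_{s\in\mathfrak{S}(n,\infty)}\|\mathcal{K}(s)\eta-\eta\|=0$ for each $\eta\in\mathcal{H}$. $(k\;j)$ denotes the transposition of $k$ and $j$, and ${}^n\sigma_m=(n+1\;\;n+m+1)(n+2\;\;n+m+2)\cdots(n+m\;\;n+2m)$. Both weak-operator limits $P_n$ and $O_k$ exist and are self-adjoint projections. *)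

theory Defs
  imports "HOL-Analysis.Analysis" "HOL-Combinatorics.Transposition"
begin

text \<open>Positive integers 1,2,3,... are the naturals >= 1; the point 0 is an extra
  point which all elements of the group fix, so the group below is exactly the group
  of all bijections of {1,2,...}.\<close>

definition Sinf :: "(nat \<Rightarrow> nat) set" where
  "Sinf = {s. bij s \<and> s 0 = 0}"

definition Sinf_fix :: "nat \<Rightarrow> (nat \<Rightarrow> nat) set" where
  "Sinf_fix n = {s \<in> Sinf. \<forall>j\<in>{1..n}. s j = j}"

definition sigma :: "nat \<Rightarrow> nat \<Rightarrow> nat \<Rightarrow> nat" where
  "sigma n m = fold (\<lambda>i f. f \<circ> Transposition.transpose (n + i) (n + m + i)) [1..<m+1] id"

text \<open>A complex Hilbert space is modelled as a real Hilbert space (real part of the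
  complex inner product) together with the multiplication-by-i operator J.\<close>
definition complex_structure :: "('a::real_inner \<Rightarrow> 'a) \<Rightarrow> bool" where
  "complex_structure J \<longleftrightarrow> linear J \<and> (\<forall>x. J (J x) = - x) \<and>
     (\<forall>x y. inner (J x) (J y) = inner x y)"

definition unitary_op :: "('a::real_inner \<Rightarrow> 'a) \<Rightarrow> ('a \<Rightarrow> 'a) \<Rightarrow> bool" where
  "unitary_op J U \<longleftrightarrow> linear U \<and> (\<forall>x. U (J x) = J (U x)) \<and> surj U \<and>
     (\<forall>x y. inner (U x) (U y) = inner x y)"

definition continuous_unitary_rep ::
  "('a::real_inner \<Rightarrow> 'a) \<Rightarrow> ((nat \<Rightarrow> nat) \<Rightarrow> 'a \<Rightarrow> 'a) \<Rightarrow> bool" where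
  "continuous_unitary_rep J K \<longleftrightarrow>
     (\<forall>s\<in>Sinf. unitary_op J (K s)) \<and>
     (\<forall>s\<in>Sinf. \<forall>t\<in>Sinf. K (s \<circ> t) = K s \<circ> K t) \<and>
     (\<forall>\<eta>. (\<lambda>n. SUP s\<in>Sinf_fix n. norm (K s \<eta> - \<eta>)) \<longlonglongrightarrow> 0)"

text \<open>P is the weak-operator limit of the sequence of operators A m. (Convergence of the
  real parts of all complex inner products is equivalent to weak convergence, since the
  imaginary part of <u,v> is the real part of <u, J v> up to sign.)\<close>
definition wot_limit :: "(nat \<Rightarrow> 'a::real_inner \<Rightarrow> 'a) \<Rightarrow> ('a \<Rightarrow> 'a) \<Rightarrow> bool" where
  "wot_limit A P \<longleftrightarrow> (\<forall>x y. (\<lambda>m. inner (A m x) y) \<longlonglongrightarrow> inner (P x) y)"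

end

theory Submission
  imports Defs
begin

text \<open>Both operators are weak limits of self-adjoint unitaries, hence self-adjoint.
  If k \<le> n, the transposition (k N) commutes with sigma n m once N > n + 2m; the weak
  limit in N makes O_k commute with every K (sigma n m), and the weak limit in m then makes
  it commute with P_n.
  If k > n, every transposition (a b) with n < a < b fixes the range of P_n: conjugation by
  sigma n m turns it into (a+m b+m), which fixes 1, ..., a+m-1 and therefore, by continuity
  of K, acts almost trivially for large m. Hence O_k P_n = P_n, and taking adjoints gives
  P_n O_k = P_n as well. Only the real inner product enters the argument.\<close>

definition selfadjoint :: "('a::real_inner \<Rightarrow> 'a) \<Rightarrow> bool" where
  "selfadjoint B \<longleftrightarrow> (\<forall>x y. inner (B x) y = inner x (B y))"

lemma selfadjoint_commute_if_absorbs: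
  assumes "selfadjoint P" "selfadjoint Q" "Q \<circ> P = P"
  shows "P \<circ> Q = Q \<circ> P"
proof
  fix x
  have QP: "Q (P u) = P u" for u using assms(3) by (metis comp_apply)
  have "inner (P (Q x)) z = inner (Q (P x)) z" for z
    using assms(1,2) QP by (simp add: selfadjoint_def)
  then show "(P \<circ> Q) x = (Q \<circ> P) x" by (metis comp_apply vector_eq_rdot)
qed

lemma wot_limitD: "wot_limit A P \<Longrightarrow> (\<lambda>m. inner (A m x) y) \<longlonglongrightarrow> inner (P x) y"
  unfolding wot_limit_def by blast

lemma wot_limit_selfadjoint:
  assumes P: "wot_limit A P" and A: "eventually (\<lambda>m. selfadjoint (A m)) sequentially"
  shows "selfadjoint P"
  unfolding selfadjoint_def
proof (intro allI)
  fix x y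
  have "(\<lambda>m. inner x (A m y)) \<longlonglongrightarrow> inner x (P y)"
    using wot_limitD[OF P, of y x] by (simp add: inner_commute)
  moreover have "eventually (\<lambda>m. inner x (A m y) = inner (A m x) y) sequentially"
    using A by eventually_elim (simp add: selfadjoint_def)
  ultimately have "(\<lambda>m. inner (A m x) y) \<longlonglongrightarrow> inner x (P y)"
    by (rule Lim_transform_eventually)
  then show "inner (P x) y = inner x (P y)"
    using wot_limitD[OF P] by (rule LIMSEQ_unique[rotated])
qed

lemma wot_limit_commute:
  assumes P: "wot_limit A P" and AB: "eventually (\<lambda>m. A m \<circ> B = B \<circ> A m) sequentially"
    and B: "selfadjoint B"
  shows "P \<circ> B = B \<circ> P"
proof
  fix x
  have "inner (P (B x)) y = inner (B (P x)) y" for y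
  proof -
    have "eventually (\<lambda>m. inner (A m x) (B y) = inner (A m (B x)) y) sequentially"
      using AB
    proof eventually_elim
      case (elim m)
      then have "A m (B x) = B (A m x)" by (metis comp_apply)
      with B show ?case by (simp add: selfadjoint_def)
    qed
    with wot_limitD[OF P] have "(\<lambda>m. inner (A m (B x)) y) \<longlonglongrightarrow> inner (P x) (B y)"
      by (rule Lim_transform_eventually)
    with wot_limitD[OF P] have "inner (P (B x)) y = inner (P x) (B y)"
      by (rule LIMSEQ_unique)
    with B show ?thesis by (simp add: selfadjoint_def)
  qed
  then show "(P \<circ> B) x = (B \<circ> P) x" by (metis comp_apply vector_eq_rdot)
qed

lemma wot_limit_fixed:
  assumes P: "wot_limit A P" and "eventually (\<lambda>m. A m v = v) sequentially"
  shows "P v = v"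
proof -
  have "inner (P v) y = inner v y" for y
  proof -
    have "eventually (\<lambda>m. inner (A m v) y = inner v y) sequentially"
      using assms(2) by eventually_elim simp
    with wot_limitD[OF P] have "(\<lambda>m. inner v y) \<longlonglongrightarrow> inner (P v) y"
      by (rule Lim_transform_eventually)
    then show ?thesis using tendsto_const by (rule LIMSEQ_unique)
  qed
  then show ?thesis by (metis vector_eq_rdot)
qed

lemma wot_limit_tendsto_inner:
  assumes P: "wot_limit A P" and lin: "\<And>m. linear (A m)"
    and contr: "\<And>m u. norm (A m u) \<le> norm u" and xs: "xs \<longlonglongrightarrow> x"
  shows "(\<lambda>m. inner (A m (xs m)) z) \<longlonglongrightarrow> inner (P x) z"
proof -
  have split: "inner (A m (xs m)) z = inner (A m (xs m - x)) z + inner (A m x) z" for m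
    by (simp add: linear_diff[OF lin] inner_diff_left)
  have bound: "\<forall>m. norm (inner (A m (xs m - x)) z) \<le> norm (xs m - x) * norm z"
  proof
    fix m
    have "norm (inner (A m (xs m - x)) z) \<le> norm (A m (xs m - x)) * norm z"
      using Cauchy_Schwarz_ineq2 by simp
    also have "\<dots> \<le> norm (xs m - x) * norm z" by (simp add: contr mult_right_mono)
    finally show "norm (inner (A m (xs m - x)) z) \<le> norm (xs m - x) * norm z" .
  qed
  have "(\<lambda>m. norm (xs m - x)) \<longlonglongrightarrow> 0"
    using xs by (simp add: LIM_zero tendsto_norm_zero)
  then have "(\<lambda>m. norm (xs m - x) * norm z) \<longlonglongrightarrow> 0"
    by (rule tendsto_mult_left_zero)
  with always_eventually[OF bound] have "(\<lambda>m. inner (A m (xs m - x)) z) \<longlonglongrightarrow> 0"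
    by (rule Lim_null_comparison)
  from tendsto_add[OF this wot_limitD[OF P]] show ?thesis by (simp add: split)
qed

lemma fold_transpose_shift_apply:
  assumes "j \<le> m"
  shows "fold (\<lambda>i f. f \<circ> Transposition.transpose (n + i) (n + m + i)) [1..<j+1] id x =
    (if n < x \<and> x \<le> n + j then x + m else if n + m < x \<and> x \<le> n + m + j then x - m else x)"
  using assms
proof (induction j arbitrary: x)
  case 0
  then show ?case by simp
next
  case (Suc j)
  have "[1..<Suc j + 1] = [1..<j+1] @ [Suc j]" by simp
  then show ?case
    using Suc by (auto simp: Transposition.transpose_def)
qed

lemma sigma_apply:
  "sigma n m x =
    (if n < x \<and> x \<le> n + m then x + m else if n + m < x \<and> x \<le> n + 2*m then x - m else x)"
  unfolding sigma_def using fold_transpose_shift_apply[of m m n x] by simp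

lemma sigma_comp_sigma: "sigma n m \<circ> sigma n m = id"
  by (auto simp: fun_eq_iff sigma_apply)

lemma sigma_in_Sinf: "sigma n m \<in> Sinf"
  unfolding Sinf_def using sigma_comp_sigma by (auto intro!: o_bij simp: sigma_apply)

lemma transpose_in_Sinf: "a \<ge> 1 \<Longrightarrow> b \<ge> 1 \<Longrightarrow> Transposition.transpose a b \<in> Sinf"
  unfolding Sinf_def by (auto simp: Transposition.transpose_def)

lemma transpose_in_Sinf_fix:
  "a \<ge> 1 \<Longrightarrow> a < b \<Longrightarrow> Transposition.transpose a b \<in> Sinf_fix (a - 1)"
  unfolding Sinf_fix_def using transpose_in_Sinf[of a b] by (auto simp: Transposition.transpose_def)

lemma sigma_transpose_commute:
  "k \<le> n \<Longrightarrow> n + 2*m < N \<Longrightarrow>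
    Transposition.transpose k N \<circ> sigma n m = sigma n m \<circ> Transposition.transpose k N"
  by (auto simp: fun_eq_iff sigma_apply Transposition.transpose_def)

lemma transpose_comp_sigma:
  "n < a \<Longrightarrow> a < b \<Longrightarrow> b \<le> n + m \<Longrightarrow>
    Transposition.transpose a b \<circ> sigma n m = sigma n m \<circ> Transposition.transpose (a+m) (b+m)"
  by (auto simp: fun_eq_iff sigma_apply Transposition.transpose_def)

context
  fixes J :: "'a::real_inner \<Rightarrow> 'a" and K :: "(nat \<Rightarrow> nat) \<Rightarrow> 'a \<Rightarrow> 'a"
  assumes rep: "continuous_unitary_rep J K"
begin

lemma rep_comp: "s \<in> Sinf \<Longrightarrow> t \<in> Sinf \<Longrightarrow> K (s \<circ> t) = K s \<circ> K t"
  using rep unfolding continuous_unitary_rep_def by blast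

lemma rep_linear: "s \<in> Sinf \<Longrightarrow> linear (K s)"
  using rep unfolding continuous_unitary_rep_def unitary_op_def by blast

lemma rep_inner: "s \<in> Sinf \<Longrightarrow> inner (K s x) (K s y) = inner x y"
  using rep unfolding continuous_unitary_rep_def unitary_op_def by blast

lemma rep_norm: "s \<in> Sinf \<Longrightarrow> norm (K s x) = norm x"
  using rep_inner[of s x x] by (simp add: norm_eq_sqrt_inner)

lemma rep_id: "K id = id"
proof
  fix x
  have "id \<in> Sinf" unfolding Sinf_def by simp
  then have "surj (K id)" and idem: "K id = K id \<circ> K id"
    using rep rep_comp[of id id] unfolding continuous_unitary_rep_def unitary_op_def by auto
  then obtain w where "x = K id w" by (metis surjD)
  then show "K id x = id x" using idem by (metis comp_apply id_apply)
qed

lemma rep_commute: "s \<in> Sinf \<Longrightarrow> t \<in> Sinf \<Longrightarrow> s \<circ> t = t \<circ> s \<Longrightarrow> K s \<circ> K t = K t \<circ> K s"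
  by (metis rep_comp)

lemma selfadjoint_rep_involution:
  assumes "s \<in> Sinf" "s \<circ> s = id"
  shows "selfadjoint (K s)"
  unfolding selfadjoint_def
proof (intro allI)
  fix x y
  have "K s (K s y) = y" using rep_comp[OF assms(1,1)] assms(2) rep_id by (metis comp_apply id_apply)
  then show "inner (K s x) y = inner x (K s y)" using rep_inner[OF assms(1)] by metis
qed

lemma selfadjoint_rep_sigma: "selfadjoint (K (sigma n m))"
  using selfadjoint_rep_involution sigma_in_Sinf sigma_comp_sigma by blast

lemma selfadjoint_rep_transpose: "a \<ge> 1 \<Longrightarrow> b \<ge> 1 \<Longrightarrow> selfadjoint (K (Transposition.transpose a b))"
  using selfadjoint_rep_involution transpose_in_Sinf by (metis transpose_comp_involutory)

lemma rep_displacement_le_SUP: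
  assumes "s \<in> Sinf_fix j"
  shows "norm (K s y - y) \<le> (SUP s\<in>Sinf_fix j. norm (K s y - y))"
proof (rule cSUP_upper[OF assms], rule bdd_aboveI2)
  fix s assume "s \<in> Sinf_fix j"
  then have "s \<in> Sinf" unfolding Sinf_fix_def by simp
  then show "norm (K s y - y) \<le> 2 * norm y"
    using norm_triangle_ineq4[of "K s y" y] rep_norm by simp
qed

lemma rep_tendsto_id_fixing:
  assumes "\<And>m. s m \<in> Sinf_fix (f m)" and "filterlim f at_top sequentially"
  shows "(\<lambda>m. K (s m) y) \<longlonglongrightarrow> y"
proof -
  let ?S = "\<lambda>j. SUP s\<in>Sinf_fix j. norm (K s y - y)"
  have "?S \<longlonglongrightarrow> 0" using rep unfolding continuous_unitary_rep_def by blast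
  from filterlim_compose[OF this assms(2)] have S_lim: "(\<lambda>m. ?S (f m)) \<longlonglongrightarrow> 0" .
  have bound: "\<forall>m. norm (K (s m) y - y) \<le> ?S (f m)"
    using rep_displacement_le_SUP[OF assms(1)] by blast
  have "(\<lambda>m. K (s m) y - y) \<longlonglongrightarrow> 0"
    using Lim_null_comparison[OF always_eventually[OF bound] S_lim] .
  then show ?thesis by (rule LIM_zero_cancel)
qed

lemma rep_sigma_conj_transpose:
  assumes "n < a" "a < b" "b \<le> n + m"
  shows "K (sigma n m) (K (Transposition.transpose (a+m) (b+m)) y)
    = K (Transposition.transpose a b) (K (sigma n m) y)"
proof -
  have t: "Transposition.transpose a b \<in> Sinf" "Transposition.transpose (a+m) (b+m) \<in> Sinf"
    using assms by (auto intro: transpose_in_Sinf)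
  have "K (sigma n m) \<circ> K (Transposition.transpose (a+m) (b+m))
      = K (sigma n m \<circ> Transposition.transpose (a+m) (b+m))"
    by (rule rep_comp[OF sigma_in_Sinf t(2), symmetric])
  also have "sigma n m \<circ> Transposition.transpose (a+m) (b+m) = Transposition.transpose a b \<circ> sigma n m"
    using transpose_comp_sigma[OF assms] by simp
  also have "K (Transposition.transpose a b \<circ> sigma n m) = K (Transposition.transpose a b) \<circ> K (sigma n m)"
    by (rule rep_comp[OF t(1) sigma_in_Sinf])
  finally show ?thesis by (metis comp_apply)
qed

lemma transpose_fixes_sigma_limit:
  assumes P: "wot_limit (\<lambda>m. K (sigma n m)) Pn" and ab: "n < a" "a < b"
  shows "K (Transposition.transpose a b) (Pn y) = Pn y"
proof -
  let ?t = "Transposition.transpose a b"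
  let ?t' = "\<lambda>m. Transposition.transpose (a+m) (b+m)"
  have t_selfadjoint: "selfadjoint (K ?t)"
    using ab by (intro selfadjoint_rep_transpose) auto
  have "inner (Pn y) (K ?t z) = inner (Pn y) z" for z
  proof -
    have "?t' m \<in> Sinf_fix (m + (a - 1))" for m
      using transpose_in_Sinf_fix[of "a + m" "b + m"] ab by (simp add: add.commute)
    then have t'_lim: "(\<lambda>m. K (?t' m) y) \<longlonglongrightarrow> y"
      using filterlim_add_const_nat_at_top by (rule rep_tendsto_id_fixing)
    have "(\<lambda>m. inner (K (sigma n m) (K (?t' m) y)) z) \<longlonglongrightarrow> inner (Pn y) z"
      by (rule wot_limit_tendsto_inner[OF P _ _ t'_lim])
        (simp_all add: rep_linear rep_norm sigma_in_Sinf)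
    moreover have "eventually (\<lambda>m. inner (K (sigma n m) (K (?t' m) y)) z
                                  = inner (K (sigma n m) y) (K ?t z)) sequentially"
      using eventually_ge_at_top[of "b - n"]
    proof eventually_elim
      case (elim m)
      with ab t_selfadjoint show ?case
        by (simp add: rep_sigma_conj_transpose selfadjoint_def)
    qed
    ultimately have "(\<lambda>m. inner (K (sigma n m) y) (K ?t z)) \<longlonglongrightarrow> inner (Pn y) z"
      by (rule Lim_transform_eventually)
    with wot_limitD[OF P] show ?thesis by (rule LIMSEQ_unique)
  qed
  then have "inner (K ?t (Pn y)) z = inner (Pn y) z" for z
    using t_selfadjoint by (simp add: selfadjoint_def)
  then show ?thesis by (metis vector_eq_rdot)
qed

lemma selfadjoint_sigma_limit: "wot_limit (\<lambda>m. K (sigma n m)) Pn \<Longrightarrow> selfadjoint Pn"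
  by (erule wot_limit_selfadjoint) (simp add: selfadjoint_rep_sigma)

lemma selfadjoint_transpose_limit:
  assumes "k \<ge> 1" and O: "wot_limit (\<lambda>N. K (Transposition.transpose k N)) Ok"
  shows "selfadjoint Ok"
proof (rule wot_limit_selfadjoint[OF O])
  show "eventually (\<lambda>N. selfadjoint (K (Transposition.transpose k N))) sequentially"
    using eventually_ge_at_top[of 1]
    by (rule eventually_mono) (rule selfadjoint_rep_transpose[OF assms(1)])
qed

lemma transpose_limit_commute_rep_sigma:
  assumes "1 \<le> k" "k \<le> n" and O: "wot_limit (\<lambda>N. K (Transposition.transpose k N)) Ok"
  shows "Ok \<circ> K (sigma n m) = K (sigma n m) \<circ> Ok"
proof (rule wot_limit_commute[OF O _ selfadjoint_rep_sigma])
  show "eventually (\<lambda>N. K (Transposition.transpose k N) \<circ> K (sigma n m)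
                      = K (sigma n m) \<circ> K (Transposition.transpose k N)) sequentially"
    using eventually_gt_at_top[of "n + 2*m"]
  proof eventually_elim
    case (elim N)
    with assms(1,2) show ?case
      by (intro rep_commute sigma_transpose_commute transpose_in_Sinf sigma_in_Sinf) auto
  qed
qed

lemma transpose_limit_absorbs_sigma_limit:
  assumes "n < k" and O: "wot_limit (\<lambda>N. K (Transposition.transpose k N)) Ok"
    and P: "wot_limit (\<lambda>m. K (sigma n m)) Pn"
  shows "Ok \<circ> Pn = Pn"
proof
  fix y
  have "eventually (\<lambda>N. K (Transposition.transpose k N) (Pn y) = Pn y) sequentially"
    using eventually_gt_at_top[of k]
    by eventually_elim (use assms(1) in \<open>simp add: transpose_fixes_sigma_limit[OF P]\<close>)
  then show "(Ok \<circ> Pn) y = Pn y" using wot_limit_fixed[OF O] by simp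
qed

end

theorem lemma5:
  fixes J :: "'a::{real_inner, complete_space} \<Rightarrow> 'a"
    and K :: "(nat \<Rightarrow> nat) \<Rightarrow> 'a \<Rightarrow> 'a"
    and Pn Ok :: "'a \<Rightarrow> 'a"
    and n k :: nat
  assumes "complex_structure J"
    and "continuous_unitary_rep J K"
    and "k \<ge> 1"
    and "wot_limit (\<lambda>m. K (sigma n m)) Pn"
    and "wot_limit (\<lambda>N. K (Transposition.transpose k N)) Ok"
  shows "Pn \<circ> Ok = Ok \<circ> Pn"
proof (cases "k \<le> n")
  case True
  then have "\<forall>m. K (sigma n m) \<circ> Ok = Ok \<circ> K (sigma n m)"
    using transpose_limit_commute_rep_sigma[OF assms(2,3) _ assms(5)] by simp
  then show ?thesis
    using wot_limit_commute[OF assms(4) always_eventually selfadjoint_transpose_limit[OF assms(2,3,5)]]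
    by simp
next
  case False
  then have "Ok \<circ> Pn = Pn" using transpose_limit_absorbs_sigma_limit[OF assms(2) _ assms(5,4)] by simp
  then show ?thesis
    using selfadjoint_commute_if_absorbs selfadjoint_sigma_limit[OF assms(2,4)]
      selfadjoint_transpose_limit[OF assms(2,3,5)] by blast
qed

end
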